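(* Let $R$ be a unital ring with involution and let $a,b\in R$ both be core invertible with $a\overset{\circledast}{\leq} b$. Then: (1) $ab$, $a^2$ and $ba$ are core invertible and $(ab)^{\circledast}=b^{\circledast}a^{\circledast}=(a^{\circledast})^{2}=(a^{2})^{\circledast}=(ba)^{\circledast}$; (2) if moreover $a$ is an EP element, then $ab$ is an EP element.
   Context: $R$ is a ring with identity and an involution $x\mapsto x^{*}$. An element $a\in R$ is core invertible if there exists $x\in R$ with $axa=a$, $xR=aR$ and $Rx=Ra^{*}$; such $x$ is unique, called the core inverse of $a$ and denoted $a^{\circledast}$. For $a$ core invertible and $b\in R$, $a\overset{\circledast}{\leq} b$ means $a^{\circledast}a=a^{\circledast}b$ and $aa^{\circledast}=ba^{\circledast}$. The Moore–Penrose inverse of $a$ is the (unique if it exists) $x$ with $axa=a$, $xax=x$, $(ax)^*=ax$, $(xa)^*=xa$, denoted $a^{\dagger}$. The group inverse of $a$ is the (unique if it exists) $x$ with $axa=a$, $xax=x$, $ax=xa$, denoted $a^{\#}$. An element $a$ is EP if both $a^{\dagger}$ and $a^{\#}$ exist and $a^{\dagger}=a^{\#}$. *)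

theory Defs
  imports Main
begin

class ring_invol = ring_1 +
  fixes invol :: "'a \<Rightarrow> 'a"  ("_\<^sup>\<star>" [1000] 999)
  assumes invol_invol: "(x\<^sup>\<star>)\<^sup>\<star> = x"
    and invol_add: "(x + y)\<^sup>\<star> = x\<^sup>\<star> + y\<^sup>\<star>"
    and invol_mult: "(x * y)\<^sup>\<star> = y\<^sup>\<star> * x\<^sup>\<star>"

context ring_invol
begin

definition right_ideal :: "'a \<Rightarrow> 'a set" where
  "right_ideal a = {a * r | r. True}"

definition left_ideal :: "'a \<Rightarrow> 'a set" where
  "left_ideal a = {r * a | r. True}"

definition is_core_inverse :: "'a \<Rightarrow> 'a \<Rightarrow> bool" where
  "is_core_inverse a x \<longleftrightarrow> a * x * a = a \<and> right_ideal x = right_ideal a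
      \<and> left_ideal x = left_ideal (a\<^sup>\<star>)"

definition core_invertible :: "'a \<Rightarrow> bool" where
  "core_invertible a \<longleftrightarrow> (\<exists>x. is_core_inverse a x)"

definition core_inv :: "'a \<Rightarrow> 'a" where
  "core_inv a = (THE x. is_core_inverse a x)"

definition core_le :: "'a \<Rightarrow> 'a \<Rightarrow> bool" where
  "core_le a b \<longleftrightarrow> core_inv a * a = core_inv a * b \<and> a * core_inv a = b * core_inv a"

definition is_MP_inverse :: "'a \<Rightarrow> 'a \<Rightarrow> bool" where
  "is_MP_inverse a x \<longleftrightarrow> a * x * a = a \<and> x * a * x = x
     \<and> (a * x)\<^sup>\<star> = a * x \<and> (x * a)\<^sup>\<star> = x * a"

definition is_group_inverse :: "'a \<Rightarrow> 'a \<Rightarrow> bool" where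
  "is_group_inverse a x \<longleftrightarrow> a * x * a = a \<and> x * a * x = x \<and> a * x = x * a"

definition MP_inv :: "'a \<Rightarrow> 'a" where
  "MP_inv a = (THE x. is_MP_inverse a x)"

definition group_inv :: "'a \<Rightarrow> 'a" where
  "group_inv a = (THE x. is_group_inverse a x)"

definition is_EP :: "'a \<Rightarrow> bool" where
  "is_EP a \<longleftrightarrow> (\<exists>x. is_MP_inverse a x) \<and> (\<exists>x. is_group_inverse a x)
      \<and> MP_inv a = group_inv a"

end

end

theory Submission
  imports Defs
begin

text \<open>The ideal conditions defining the core inverse are equivalent to the five equations
  \<open>axa = a\<close>, \<open>xax = x\<close>, \<open>(ax)\<^sup>\<star> = ax\<close>, \<open>xa\<^sup>2 = a\<close>, \<open>ax\<^sup>2 = x\<close>. If \<open>a\<^sup>\<circledast>a = a\<^sup>\<circledast>b\<close> and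
  \<open>aa\<^sup>\<circledast> = ba\<^sup>\<circledast>\<close>, these equations are readily verified for the pairs \<open>(ab, (a\<^sup>\<circledast>)\<^sup>2)\<close> and
  \<open>(a\<^sup>2, (a\<^sup>\<circledast>)\<^sup>2)\<close>, while \<open>ba = ba\<^sup>\<circledast>a\<^sup>2 = aa\<^sup>\<circledast>a\<^sup>2 = a\<^sup>2\<close>. If \<open>a\<close> is EP its core inverse is
  also its Moore-Penrose and group inverse, and then \<open>(a\<^sup>\<circledast>)\<^sup>2\<close> is both of these for \<open>ab\<close>.\<close>

context ring_invol
begin

lemma is_core_inverseD:
  assumes "is_core_inverse a x"
  shows "a * x * a = a" "x * a * x = x" "(a * x)\<^sup>\<star> = a * x" "x * a * a = a" "a * x * x = x"
proof -
  show axa: "a * x * a = a"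
    using assms unfolding is_core_inverse_def by blast
  have R: "right_ideal x = right_ideal a" and L: "left_ideal x = left_ideal (a\<^sup>\<star>)"
    using assms unfolding is_core_inverse_def by blast+
  have "x \<in> right_ideal a" and "a \<in> right_ideal x" and "x \<in> left_ideal (a\<^sup>\<star>)"
    using R L unfolding right_ideal_def left_ideal_def
    by (metis (mono_tags, lifting) mem_Collect_eq mult_1_right mult_1_left)+
  then obtain r s t where r: "x = a * r" and s: "a = x * s" and t: "x = t * a\<^sup>\<star>"
    unfolding right_ideal_def left_ideal_def by blast
  show "a * x * x = x"
    using axa r by (metis mult.assoc)
  have "a\<^sup>\<star> * (a * x)\<^sup>\<star> = a\<^sup>\<star>"
    using arg_cong[OF axa, of invol] by (simp add: invol_mult mult.assoc)
  then have x_absorbs: "x * (a * x)\<^sup>\<star> = x"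
    using t by (metis mult.assoc)
  then have ax_eq: "a * x = a * x * (a * x)\<^sup>\<star>"
    by (simp add: mult.assoc)
  also have "\<dots> = (a * x * (a * x)\<^sup>\<star>)\<^sup>\<star>"
    by (simp add: invol_mult invol_invol)
  finally show herm: "(a * x)\<^sup>\<star> = a * x"
    using ax_eq by simp
  show xax: "x * a * x = x"
    using x_absorbs herm by (simp add: mult.assoc)
  show "x * a * a = a"
    using xax s by (metis mult.assoc)
qed

lemma is_core_inverseI:
  assumes axa: "a * x * a = a" and xax: "x * a * x = x" and herm: "(a * x)\<^sup>\<star> = a * x"
    and xaa: "x * a * a = a" and axx: "a * x * x = x"
  shows "is_core_inverse a x"
proof -
  have "right_ideal x = right_ideal a"
    unfolding right_ideal_def using axx xaa by (metis mult.assoc)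
  moreover have "x = x * (x\<^sup>\<star> * a\<^sup>\<star>)" and "a\<^sup>\<star> = a\<^sup>\<star> * (a * x)"
    using xax herm arg_cong[OF axa, of invol] by (metis invol_mult mult.assoc)+
  then have "left_ideal x = left_ideal (a\<^sup>\<star>)"
    unfolding left_ideal_def by (metis mult.assoc)
  ultimately show ?thesis
    unfolding is_core_inverse_def using axa by blast
qed

lemma is_core_inverse_unique:
  assumes x: "is_core_inverse a x" and y: "is_core_inverse a y"
  shows "x = y"
proof -
  note X = is_core_inverseD[OF x] and Y = is_core_inverseD[OF y]
  have "a * x = (a * y * (a * x))\<^sup>\<star>"
    using X(3) Y(1) by (simp flip: mult.assoc)
  also have "\<dots> = a * x * (a * y)"
    using X(3) Y(3) by (simp add: invol_mult)
  also have "\<dots> = a * y"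
    using X(1) by (simp flip: mult.assoc)
  finally have "a * x = a * y" .
  then have "x = x * a * (a * y * y)"
    using X(2) Y(5) by (simp add: mult.assoc)
  also have "\<dots> = (x * a * a) * y * y"
    by (simp add: mult.assoc)
  also have "\<dots> = y"
    using X(4) Y(5) by simp
  finally show ?thesis .
qed

lemma core_inv_eq: "is_core_inverse a x \<Longrightarrow> core_inv a = x"
  unfolding core_inv_def using is_core_inverse_unique by blast

lemma core_le_iff:
  "is_core_inverse a x \<Longrightarrow> core_le a b \<longleftrightarrow> x * a = x * b \<and> a * x = b * x"
  unfolding core_le_def by (simp add: core_inv_eq)

lemma is_MP_inverse_unique:
  assumes x: "is_MP_inverse a x" and y: "is_MP_inverse a y"
  shows "x = y"
proof -
  have X: "a * x * a = a" "x * a * x = x" "(a * x)\<^sup>\<star> = a * x" "(x * a)\<^sup>\<star> = x * a"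
    using x unfolding is_MP_inverse_def by auto
  have Y: "a * y * a = a" "y * a * y = y" "(a * y)\<^sup>\<star> = a * y" "(y * a)\<^sup>\<star> = y * a"
    using y unfolding is_MP_inverse_def by auto
  have "x = x * ((a * y * a) * x)\<^sup>\<star>"
    using X(2,3) Y(1) by (simp add: mult.assoc)
  also have "\<dots> = x * (a * x)\<^sup>\<star> * (a * y)\<^sup>\<star>"
    by (simp add: invol_mult mult.assoc)
  also have "\<dots> = x * a * y"
    using X(2,3) Y(3) by (simp add: mult.assoc)
  also have "\<dots> = (x * a)\<^sup>\<star> * (y * a)\<^sup>\<star> * y"
    using X(4) Y(2,4) by (simp add: mult.assoc)
  also have "\<dots> = (y * (a * x * a))\<^sup>\<star> * y"
    by (simp add: invol_mult mult.assoc)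
  also have "\<dots> = y"
    using X(1) Y(2,4) by (simp add: mult.assoc)
  finally show ?thesis .
qed

lemma MP_inv_eq: "is_MP_inverse a x \<Longrightarrow> MP_inv a = x"
  unfolding MP_inv_def using is_MP_inverse_unique by blast

lemma is_group_inverse_unique:
  assumes x: "is_group_inverse a x" and y: "is_group_inverse a y"
  shows "x = y"
proof -
  have X: "a * x * a = a" "x * a * x = x" "a * x = x * a"
    using x unfolding is_group_inverse_def by auto
  have Y: "a * y * a = a" "y * a * y = y" "a * y = y * a"
    using y unfolding is_group_inverse_def by auto
  have "a * x = x * (a * y * a)"
    using X(3) Y(1) by simp
  also have "\<dots> = a * x * a * y"
    using X(3) Y(3) by (metis mult.assoc)
  also have "\<dots> = a * y"
    using X(1) by simp
  finally have "a * x = a * y" .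
  then have "x = a * y * y"
    using X(2,3) by (metis mult.assoc)
  also have "\<dots> = y"
    using Y(2,3) by (simp add: mult.assoc)
  finally show ?thesis .
qed

lemma group_inv_eq: "is_group_inverse a x \<Longrightarrow> group_inv a = x"
  unfolding group_inv_def using is_group_inverse_unique by blast

lemma is_EP_iff: "is_EP a \<longleftrightarrow> (\<exists>x. is_MP_inverse a x \<and> is_group_inverse a x)"
  unfolding is_EP_def using MP_inv_eq group_inv_eq by metis

lemma EP_core_inverse:
  assumes "is_EP a" and "is_core_inverse a x"
  shows "is_MP_inverse a x" and "is_group_inverse a x"
proof -
  obtain g where mp: "is_MP_inverse a g" and grp: "is_group_inverse a g"
    using assms(1) is_EP_iff by blast
  have "is_core_inverse a g"
    using mp grp unfolding is_MP_inverse_def is_group_inverse_def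
    by (intro is_core_inverseI) (metis mult.assoc)+
  then have "g = x"
    using assms(2) is_core_inverse_unique by blast
  then show "is_MP_inverse a x" and "is_group_inverse a x"
    using mp grp by simp_all
qed

lemma is_core_inverse_square:
  assumes "is_core_inverse a x"
  shows "is_core_inverse (a * a) (x * x)"
proof -
  note X = is_core_inverseD[OF assms]
  have aaxx: "a * a * (x * x) = a * x"
    using X(5) by (simp add: mult.assoc)
  show ?thesis
  proof (rule is_core_inverseI)
    show "a * a * (x * x) * (a * a) = a * a" and "(a * a * (x * x))\<^sup>\<star> = a * a * (x * x)"
      using aaxx X(1,3) by (simp_all flip: mult.assoc)
    show "x * x * (a * a) * (x * x) = x * x" and "x * x * (a * a) * (a * a) = a * a"
      using X(2,4) by (metis mult.assoc)+
    show "a * a * (x * x) * (x * x) = x * x"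
      using aaxx X(5) by (simp flip: mult.assoc)
  qed
qed

lemma core_le_mult_left_eq_square:
  assumes "is_core_inverse a x" and "core_le a b"
  shows "b * a = a * a"
proof -
  have "b * a = b * x * a * a"
    using is_core_inverseD(4)[OF assms(1)] by (simp add: mult.assoc)
  also have "\<dots> = a * a"
    using assms core_le_iff is_core_inverseD(1) by metis
  finally show ?thesis .
qed

lemma core_le_core_inverse_mult:
  assumes x: "is_core_inverse a x" and y: "is_core_inverse b y" and "core_le a b"
  shows "y * x = x * x"
proof -
  have bxx: "b * x * x = x"
    using assms core_le_iff is_core_inverseD(5) by metis
  then have "y * x = y * b * (b * x * x) * x"
    by (simp add: mult.assoc)
  also have "\<dots> = x * x"
    using bxx is_core_inverseD(4)[OF y] by (metis mult.assoc)
  finally show ?thesis .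
qed

lemma core_le_is_core_inverse_mult:
  assumes x: "is_core_inverse a x" and "core_le a b"
  shows "is_core_inverse (a * b) (x * x)"
proof -
  note X = is_core_inverseD[OF x]
  have le: "x * a = x * b" "a * x = b * x"
    using assms core_le_iff by blast+
  have abxx: "a * b * (x * x) = a * x"
    using le(2) X(5) by (metis mult.assoc)
  show ?thesis
  proof (rule is_core_inverseI)
    show "a * b * (x * x) * (a * b) = a * b" and "(a * b * (x * x))\<^sup>\<star> = a * b * (x * x)"
      using abxx X(1,3) by (simp_all flip: mult.assoc)
    show "x * x * (a * b) * (x * x) = x * x"
      using le(2) X(2,4) by (metis mult.assoc)
    show "x * x * (a * b) * (a * b) = a * b"
      using core_le_mult_left_eq_square[OF assms] X(4) by (metis mult.assoc)
    show "a * b * (x * x) * (x * x) = x * x"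
      using abxx X(5) by (simp flip: mult.assoc)
  qed
qed

lemma core_le_EP_mult:
  assumes "core_le a b" and "is_EP a" and "core_invertible a"
  shows "is_EP (a * b)"
proof -
  obtain x where x: "is_core_inverse a x"
    using assms(3) unfolding core_invertible_def by blast
  note X = is_core_inverseD[OF x]
  have le: "x * a = x * b" "a * x = b * x"
    using x assms(1) core_le_iff by blast+
  have comm: "a * x = x * a" and herm: "(x * a)\<^sup>\<star> = x * a"
    using EP_core_inverse[OF assms(2) x]
    unfolding is_MP_inverse_def is_group_inverse_def by simp_all
  have xxab: "x * x * (a * b) = x * a"
    using comm le(1) X(2) by (metis mult.assoc)
  have abxx: "a * b * (x * x) = a * x"
    using le(2) X(5) by (metis mult.assoc)
  note ab = is_core_inverseD[OF core_le_is_core_inverse_mult[OF x assms(1)]]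
  have "is_MP_inverse (a * b) (x * x)" and "is_group_inverse (a * b) (x * x)"
    unfolding is_MP_inverse_def is_group_inverse_def
    using ab(1,2) xxab abxx X(3) herm comm by simp_all
  then show ?thesis
    using is_EP_iff by blast
qed

end

theorem theorem2p10:
  fixes a b :: "'a::ring_invol"
  assumes "core_invertible a" and "core_invertible b" and "core_le a b"
  shows "core_invertible (a * b) \<and> core_invertible (a ^ 2) \<and> core_invertible (b * a)
         \<and> core_inv (a * b) = core_inv b * core_inv a
         \<and> core_inv b * core_inv a = (core_inv a) ^ 2
         \<and> (core_inv a) ^ 2 = core_inv (a ^ 2)
         \<and> core_inv (a ^ 2) = core_inv (b * a)
         \<and> (is_EP a \<longrightarrow> is_EP (a * b))"
proof -
  obtain x where x: "is_core_inverse a x"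
    using assms(1) unfolding core_invertible_def by blast
  obtain y where y: "is_core_inverse b y"
    using assms(2) unfolding core_invertible_def by blast
  have ab: "is_core_inverse (a * b) (x * x)"
    using core_le_is_core_inverse_mult[OF x assms(3)] .
  have aa: "is_core_inverse (a ^ 2) (x * x)" and ba: "is_core_inverse (b * a) (x * x)"
    using is_core_inverse_square[OF x] core_le_mult_left_eq_square[OF x assms(3)]
    by (simp_all add: power2_eq_square)
  have "y * x = x * x"
    using core_le_core_inverse_mult[OF x y assms(3)] .
  then show ?thesis
    using ab aa ba core_le_EP_mult[OF assms(3) _ assms(1)]
      core_inv_eq[OF x] core_inv_eq[OF y] core_inv_eq[OF ab] core_inv_eq[OF aa] core_inv_eq[OF ba]
    unfolding core_invertible_def by (auto simp: power2_eq_square)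
qed

end
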